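(* There is no quadratical quasigroup $(Q,\cdot)$ containing two distinct elements $a,b$ such that $Q=\{aba\}\cup H1\cup H2\cup H3\cup H4\cup H5\cup H6$ with the six sets $H1,\dots,H6$ pairwise disjoint (equivalently, with $|Q|=25$).
   Context: A quadratical quasigroup is a quasigroup $(Q,\cdot)$ satisfying $xy\cdot x=zx\cdot yz$ for all $x,y,z\in Q$; equivalently, a groupoid satisfying $x\cdot x=x$, $yx\cdot xy=x$ and $xy\cdot zw=xz\cdot yw$ for all $x,y,z,w$. For distinct $a,b\in Q$ write $aba=ab\cdot a$ and define elements $[t,k]$ (written $tk$), $t\geq 1$, $k\in\{1,2,3,4\}$, by $11=a$, $12=ab$, $13=ba$, $14=b$, and for $n\geq 2$: $n1=(n-1)1\cdot(n-1)2$, $n2=(n-1)2\cdot(n-1)4$, $n3=(n-1)3\cdot(n-1)1$, $n4=(n-1)4\cdot(n-1)3$. Put $Ht=\{t1,t2,t3,t4\}$. *)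

theory Defs
  imports Main
begin

definition quasigroup :: "'a set \<Rightarrow> ('a \<Rightarrow> 'a \<Rightarrow> 'a) \<Rightarrow> bool" where
  "quasigroup Q m \<longleftrightarrow>
     (\<forall>x\<in>Q. \<forall>y\<in>Q. m x y \<in> Q) \<and>
     (\<forall>a\<in>Q. \<forall>b\<in>Q. (\<exists>!x. x \<in> Q \<and> m a x = b) \<and> (\<exists>!y. y \<in> Q \<and> m y a = b))"

definition quadratical_quasigroup :: "'a set \<Rightarrow> ('a \<Rightarrow> 'a \<Rightarrow> 'a) \<Rightarrow> bool" where
  "quadratical_quasigroup Q m \<longleftrightarrow> quasigroup Q m \<and>
     (\<forall>x\<in>Q. \<forall>y\<in>Q. \<forall>z\<in>Q. m (m x y) x = m (m z x) (m y z))"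

text \<open>hquad m a b n = ([n+1]1, [n+1]2, [n+1]3, [n+1]4).\<close>
fun hquad :: "('a \<Rightarrow> 'a \<Rightarrow> 'a) \<Rightarrow> 'a \<Rightarrow> 'a \<Rightarrow> nat \<Rightarrow> 'a \<times> 'a \<times> 'a \<times> 'a" where
  "hquad m a b 0 = (a, m a b, m b a, b)"
| "hquad m a b (Suc n) =
     (case hquad m a b n of (x1, x2, x3, x4) \<Rightarrow> (m x1 x2, m x2 x4, m x3 x1, m x4 x3))"

definition Hset :: "('a \<Rightarrow> 'a \<Rightarrow> 'a) \<Rightarrow> 'a \<Rightarrow> 'a \<Rightarrow> nat \<Rightarrow> 'a set" where
  "Hset m a b t = (case hquad m a b (t - 1) of (x1, x2, x3, x4) \<Rightarrow> {x1, x2, x3, x4})"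

end

theory Submission
  imports Defs "HOL-Algebra.FiniteProduct"
begin

(* A quadratical quasigroup is affine over an abelian group (Toyoda-Bruck): with c = aba as zero
   and x + y = (x/c)(c\y), the maps R x = xc and L x = cx are commuting automorphisms and
   xy = R x + L y.  The equation c = ab.a forces a = -b, and then ab = -Jb and ba = Jb for
   J = R L^-1, which satisfies J^2 = -1; so everything generated by a and b has the form p b + q Jb.

   R maps H(n+1) onto Hn.  If aba and six disjoint quadruples make up Q, then R a cannot lie in
   H1, ..., H5 (else a would lie in a later quadruple besides H1), so R a is in H6, whose elements
   are (+-4) b + (+-4) Jb; hence a is one of +-8b, +-8Jb.  As |Q| = 25 kills b and Jb, each case
   gives b = 0 or puts ba into H3, contradicting the disjointness of H1 and H3. *)

locale quadratical =
  fixes Q :: "'a set" and m :: "'a \<Rightarrow> 'a \<Rightarrow> 'a"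
  assumes quadratical: "quadratical_quasigroup Q m"
begin

lemma mult_closed [simp, intro]: "x \<in> Q \<Longrightarrow> y \<in> Q \<Longrightarrow> m x y \<in> Q"
  using quadratical unfolding quadratical_quasigroup_def quasigroup_def by simp

lemma left_div_ex1: "x \<in> Q \<Longrightarrow> y \<in> Q \<Longrightarrow> \<exists>!z. z \<in> Q \<and> m x z = y"
  using quadratical unfolding quadratical_quasigroup_def quasigroup_def by simp

lemma right_div_ex1: "x \<in> Q \<Longrightarrow> y \<in> Q \<Longrightarrow> \<exists>!z. z \<in> Q \<and> m z x = y"
  using quadratical unfolding quadratical_quasigroup_def quasigroup_def by simp

lemma left_cancel: "z \<in> Q \<Longrightarrow> x \<in> Q \<Longrightarrow> y \<in> Q \<Longrightarrow> m z x = m z y \<Longrightarrow> x = y"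
  using left_div_ex1[of z "m z x"] by (metis mult_closed)

lemma right_cancel: "z \<in> Q \<Longrightarrow> x \<in> Q \<Longrightarrow> y \<in> Q \<Longrightarrow> m x z = m y z \<Longrightarrow> x = y"
  using right_div_ex1[of z "m x z"] by (metis mult_closed)

lemma quadratical_law:
  "x \<in> Q \<Longrightarrow> y \<in> Q \<Longrightarrow> z \<in> Q \<Longrightarrow> m (m x y) x = m (m z x) (m y z)"
  using quadratical unfolding quadratical_quasigroup_def by blast

lemma idem [simp]: "x \<in> Q \<Longrightarrow> m x x = x"
proof -
  assume x: "x \<in> Q"
  have "m (m x x) x = m (m x x) (m x x)" using quadratical_law[OF x x x] .
  then show ?thesis using left_cancel[of "m x x" x "m x x"] x by auto
qed

lemma swapped_products: "x \<in> Q \<Longrightarrow> z \<in> Q \<Longrightarrow> m (m z x) (m x z) = x"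
  using quadratical_law[of x x z] by simp

lemma medial:
  "x \<in> Q \<Longrightarrow> y \<in> Q \<Longrightarrow> z \<in> Q \<Longrightarrow> w \<in> Q \<Longrightarrow> m (m x y) (m z w) = m (m x z) (m y w)"
  by (smt (verit, ccfv_SIG) quadratical_law idem mult_closed)

end

section \<open>The abelian group of a quadratical quasigroup\<close>

locale quadratical_pointed = quadratical +
  fixes c :: 'a
  assumes c_in [simp]: "c \<in> Q"
begin

definition R :: "'a \<Rightarrow> 'a" where "R x = m x c"
definition L :: "'a \<Rightarrow> 'a" where "L x = m c x"

lemma bij_R: "bij_betw R Q Q"
proof (rule bij_betw_imageI)
  show "inj_on R Q" unfolding inj_on_def R_def using right_cancel[of c] by simp
  show "R ` Q = Q"
  proof
    show "Q \<subseteq> R ` Q" unfolding R_def using right_div_ex1[of c] by (metis c_in image_eqI subsetI)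
  qed (auto simp: R_def)
qed

lemma bij_L: "bij_betw L Q Q"
proof (rule bij_betw_imageI)
  show "inj_on L Q" unfolding inj_on_def L_def using left_cancel[of c] by simp
  show "L ` Q = Q"
  proof
    show "Q \<subseteq> L ` Q" unfolding L_def using left_div_ex1[of c] by (metis c_in image_eqI subsetI)
  qed (auto simp: L_def)
qed

definition Rinv :: "'a \<Rightarrow> 'a" where "Rinv = the_inv_into Q R"
definition Linv :: "'a \<Rightarrow> 'a" where "Linv = the_inv_into Q L"

lemma R_closed [simp]: "x \<in> Q \<Longrightarrow> R x \<in> Q" by (simp add: R_def)
lemma L_closed [simp]: "x \<in> Q \<Longrightarrow> L x \<in> Q" by (simp add: L_def)

lemma Rinv_closed [simp]: "x \<in> Q \<Longrightarrow> Rinv x \<in> Q"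
  using bij_betwE[OF bij_betw_the_inv_into[OF bij_R]] by (simp add: Rinv_def)
lemma Linv_closed [simp]: "x \<in> Q \<Longrightarrow> Linv x \<in> Q"
  using bij_betwE[OF bij_betw_the_inv_into[OF bij_L]] by (simp add: Linv_def)

lemma R_Rinv [simp]: "x \<in> Q \<Longrightarrow> R (Rinv x) = x"
  using bij_R by (simp add: Rinv_def f_the_inv_into_f_bij_betw)
lemma L_Linv [simp]: "x \<in> Q \<Longrightarrow> L (Linv x) = x"
  using bij_L by (simp add: Linv_def f_the_inv_into_f_bij_betw)

lemma Rinv_R [simp]: "x \<in> Q \<Longrightarrow> Rinv (R x) = x"
  using bij_R by (simp add: Rinv_def the_inv_into_f_f bij_betw_imp_inj_on)
lemma Linv_L [simp]: "x \<in> Q \<Longrightarrow> Linv (L x) = x"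
  using bij_L by (simp add: Linv_def the_inv_into_f_f bij_betw_imp_inj_on)

lemma R_eq_iff: "x \<in> Q \<Longrightarrow> y \<in> Q \<Longrightarrow> R x = R y \<longleftrightarrow> x = y"
  by (metis Rinv_R)
lemma L_eq_iff: "x \<in> Q \<Longrightarrow> y \<in> Q \<Longrightarrow> L x = L y \<longleftrightarrow> x = y"
  by (metis Linv_L)

lemma R_eq_if_Rinv_eq: "x \<in> Q \<Longrightarrow> y \<in> Q \<Longrightarrow> Rinv x = Rinv (Rinv y) \<Longrightarrow> R x = y"
  by (metis R_Rinv Rinv_closed)

lemma R_c [simp]: "R c = c" by (simp add: R_def)
lemma L_c [simp]: "L c = c" by (simp add: L_def)

lemma Rinv_c [simp]: "Rinv c = c"
  by (metis R_c Rinv_R c_in)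
lemma Linv_c [simp]: "Linv c = c"
  by (metis L_c Linv_L c_in)

lemma R_mult: "x \<in> Q \<Longrightarrow> y \<in> Q \<Longrightarrow> R (m x y) = m (R x) (R y)"
  unfolding R_def using medial[of x y c c] by simp
lemma L_mult: "x \<in> Q \<Longrightarrow> y \<in> Q \<Longrightarrow> L (m x y) = m (L x) (L y)"
  unfolding L_def using medial[of c c x y] by simp

lemma R_L_commute: "x \<in> Q \<Longrightarrow> R (L x) = L (R x)"
  unfolding R_def L_def using medial[of c x c c] by simp
lemma R_Linv_commute: "x \<in> Q \<Longrightarrow> R (Linv x) = Linv (R x)"
  by (metis L_Linv Linv_L Linv_closed R_L_commute R_closed)
lemma L_Rinv_commute: "x \<in> Q \<Longrightarrow> L (Rinv x) = Rinv (L x)"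
  by (metis R_Rinv Rinv_R Rinv_closed R_L_commute L_closed)

definition add :: "'a \<Rightarrow> 'a \<Rightarrow> 'a" (infixl "\<boxplus>" 65)
  where "x \<boxplus> y = m (Rinv x) (Linv y)"

lemma add_closed [simp]: "x \<in> Q \<Longrightarrow> y \<in> Q \<Longrightarrow> x \<boxplus> y \<in> Q"
  by (simp add: add_def)

lemma mult_eq_add: "x \<in> Q \<Longrightarrow> y \<in> Q \<Longrightarrow> m x y = R x \<boxplus> L y"
  by (simp add: add_def)

lemma c_add [simp]: "y \<in> Q \<Longrightarrow> c \<boxplus> y = y"
  by (simp add: add_def L_def[symmetric])

lemma add_c [simp]: "x \<in> Q \<Longrightarrow> x \<boxplus> c = x"
  by (simp add: add_def R_def[symmetric])

lemma R_L_add: "x \<in> Q \<Longrightarrow> y \<in> Q \<Longrightarrow> R (L (x \<boxplus> y)) = m (L x) (R y)"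
  by (simp add: add_def L_mult R_mult R_L_commute)

lemma R_L_eq_iff: "x \<in> Q \<Longrightarrow> y \<in> Q \<Longrightarrow> R (L x) = R (L y) \<longleftrightarrow> x = y"
  by (simp add: R_eq_iff L_eq_iff)

lemma add_commute: "x \<in> Q \<Longrightarrow> y \<in> Q \<Longrightarrow> x \<boxplus> y = y \<boxplus> x"
proof -
  assume x: "x \<in> Q" and y: "y \<in> Q"
  have "m (L x) (R y) = m (L y) (R x)"
    using x y medial[of c x y c] by (simp add: R_def L_def)
  then show ?thesis
    using x y by (simp add: R_L_add flip: R_L_eq_iff)
qed

lemma add_assoc: "x \<in> Q \<Longrightarrow> y \<in> Q \<Longrightarrow> z \<in> Q \<Longrightarrow> x \<boxplus> y \<boxplus> z = x \<boxplus> (y \<boxplus> z)"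
proof -
  assume x: "x \<in> Q" and y: "y \<in> Q" and z: "z \<in> Q"
  have Lx: "m (L (Rinv x)) c = L x"
    using x by (metis R_def R_L_commute R_Rinv Rinv_closed)
  have Rz: "m c (R (Linv z)) = R z"
    using z by (metis L_def R_L_commute L_Linv Linv_closed)
  have Lxy: "L (x \<boxplus> y) = m (L (Rinv x)) y"
    using x y by (simp add: add_def L_mult)
  have Ryz: "R (y \<boxplus> z) = m y (R (Linv z))"
    using y z by (simp add: add_def R_mult)
  have "R (L (x \<boxplus> y \<boxplus> z)) = m (m (L (Rinv x)) y) (m c (R (Linv z)))"
    using x y z by (simp only: R_L_add add_closed Lxy Rz)
  also have "\<dots> = m (m (L (Rinv x)) c) (m y (R (Linv z)))"
    using x y z by (simp add: medial)
  also have "\<dots> = R (L (x \<boxplus> (y \<boxplus> z)))"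
    using x y z by (simp only: R_L_add add_closed Lx Ryz)
  finally show ?thesis
    using x y z by (simp add: R_L_eq_iff)
qed

definition G :: "'a monoid" where "G = \<lparr>carrier = Q, mult = (\<boxplus>), one = c\<rparr>"

lemma G_simps [simp]: "carrier G = Q" "mult G = (\<boxplus>)" "one G = c"
  by (simp_all add: G_def)

lemma comm_group_G: "comm_group G"
proof (rule comm_groupI)
  fix x assume "x \<in> carrier G"
  then have x: "x \<in> Q" by simp
  obtain u where u: "u \<in> Q" "m u (Linv x) = c"
    using right_div_ex1[of "Linv x" c] x by auto
  show "\<exists>y\<in>carrier G. y \<otimes>\<^bsub>G\<^esub> x = \<one>\<^bsub>G\<^esub>"
    using u x by (intro bexI[of _ "R u"]) (simp_all add: add_def)
qed (auto simp: add_assoc intro: add_commute)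

end

sublocale quadratical_pointed \<subseteq> G: comm_group G
  by (rule comm_group_G)

context quadratical_pointed
begin

abbreviation neg :: "'a \<Rightarrow> 'a" where "neg x \<equiv> inv\<^bsub>G\<^esub> x"

lemma neg_closed [simp]: "x \<in> Q \<Longrightarrow> neg x \<in> Q"
  using G.inv_closed by simp

lemma add_neg [simp]: "x \<in> Q \<Longrightarrow> x \<boxplus> neg x = c"
  using G.r_inv by simp

lemma neg_c [simp]: "neg c = c"
  using G.inv_one by simp

lemma c_int_pow [simp]: "c [^]\<^bsub>G\<^esub> (k::int) = c"
  using G.int_pow_one by simp

lemma neg_unique: "x \<in> Q \<Longrightarrow> y \<in> Q \<Longrightarrow> x \<boxplus> y = c \<Longrightarrow> neg y = x"
  using G.inv_equality[of x y] by simp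

lemma add_left_commute: "x \<in> Q \<Longrightarrow> y \<in> Q \<Longrightarrow> z \<in> Q \<Longrightarrow> x \<boxplus> (y \<boxplus> z) = y \<boxplus> (x \<boxplus> z)"
  by (metis add_assoc add_commute)

lemmas add_ac = add_assoc add_commute add_left_commute

lemma R_add: "x \<in> Q \<Longrightarrow> y \<in> Q \<Longrightarrow> R (x \<boxplus> y) = R x \<boxplus> R y"
  by (simp add: add_def R_mult R_Linv_commute)
lemma L_add: "x \<in> Q \<Longrightarrow> y \<in> Q \<Longrightarrow> L (x \<boxplus> y) = L x \<boxplus> L y"
  by (simp add: add_def L_mult L_Rinv_commute)
lemma Rinv_add: "x \<in> Q \<Longrightarrow> y \<in> Q \<Longrightarrow> Rinv (x \<boxplus> y) = Rinv x \<boxplus> Rinv y"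
  by (metis R_add Rinv_R Rinv_closed R_Rinv add_closed)
lemma Linv_add: "x \<in> Q \<Longrightarrow> y \<in> Q \<Longrightarrow> Linv (x \<boxplus> y) = Linv x \<boxplus> Linv y"
  by (metis L_add Linv_L Linv_closed L_Linv add_closed)

definition J :: "'a \<Rightarrow> 'a" where "J x = R (Linv x)"

lemma J_closed [simp]: "x \<in> Q \<Longrightarrow> J x \<in> Q" by (simp add: J_def)
lemma J_c [simp]: "J c = c" by (simp add: J_def)
lemma J_add: "x \<in> Q \<Longrightarrow> y \<in> Q \<Longrightarrow> J (x \<boxplus> y) = J x \<boxplus> J y"
  by (simp add: J_def Linv_add R_add)

lemma R_hom: "R \<in> hom G G"
  by (auto intro!: homI simp: R_add)
lemma L_hom: "L \<in> hom G G"
  by (auto intro!: homI simp: L_add)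
lemma J_hom: "J \<in> hom G G"
  by (auto intro!: homI simp: J_add)

lemma hom_neg: "h \<in> hom G G \<Longrightarrow> x \<in> Q \<Longrightarrow> h (neg x) = neg (h x)"
  using group_hom.hom_inv[of G G h x] G.group_axioms by (simp add: group_hom_def group_hom_axioms_def)

lemma hom_int_pow_G: "h \<in> hom G G \<Longrightarrow> x \<in> Q \<Longrightarrow> h (x [^]\<^bsub>G\<^esub> (k::int)) = h x [^]\<^bsub>G\<^esub> k"
  using hom_int_pow[of h G G x k] G.group_axioms by simp

lemma add_R_L_self: "x \<in> Q \<Longrightarrow> R x \<boxplus> L x = x"
  using mult_eq_add[of x x] by simp

lemma add_RR_LL: "y \<in> Q \<Longrightarrow> R (R y) \<boxplus> L (L y) = c"
  using swapped_products[of c y] by (simp add: mult_eq_add R_def[symmetric] L_def[symmetric])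

lemma J_J: "x \<in> Q \<Longrightarrow> J (J x) = neg x"
proof -
  assume x: "x \<in> Q"
  have "J (J x) = R (R (Linv (Linv x)))" using x by (simp add: J_def R_Linv_commute)
  moreover have "R (R (Linv (Linv x))) \<boxplus> x = c" using add_RR_LL[of "Linv (Linv x)"] x by simp
  ultimately show ?thesis using x neg_unique[of "R (R (Linv (Linv x)))" x] by simp
qed

lemma Rinv_eq: "x \<in> Q \<Longrightarrow> Rinv x = x \<boxplus> neg (J x)"
proof -
  assume x: "x \<in> Q"
  have "L x \<boxplus> R (J x) = c"
    using add_RR_LL[of "Linv x"] x by (simp add: J_def add_commute)
  then have "R (neg (J x)) = L x"
    using x neg_unique[of "L x" "R (J x)"] by (simp add: hom_neg[OF R_hom])
  then have "R (x \<boxplus> neg (J x)) = x"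
    using x by (simp add: R_add add_R_L_self)
  then show ?thesis using x by (metis Rinv_R add_closed neg_closed J_closed)
qed

lemma Rinv_mult: "x \<in> Q \<Longrightarrow> y \<in> Q \<Longrightarrow> Rinv (m x y) = Rinv y \<boxplus> (x \<boxplus> neg y)"
proof -
  assume x: "x \<in> Q" and y: "y \<in> Q"
  have "y \<boxplus> neg (R y) = L y \<boxplus> R y \<boxplus> neg (R y)"
    using y add_R_L_self[of y] add_commute[of "R y" "L y"] by simp
  also have "\<dots> = L y"
    using y by (simp add: add_assoc)
  finally have "L y = y \<boxplus> neg (R y)" ..
  then have "m x y = y \<boxplus> R (x \<boxplus> neg y)"
    using x y by (simp add: mult_eq_add R_add hom_neg[OF R_hom] add_left_commute)
  then show ?thesis using x y by (simp add: Rinv_add)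
qed

end

section \<open>Coordinates with respect to b and J b\<close>

locale quadratical_generated = quadratical_pointed +
  fixes a b :: 'a
  assumes a_in [simp]: "a \<in> Q" and b_in [simp]: "b \<in> Q" and a_neq_b: "a \<noteq> b"
    and c_eq: "c = m (m a b) a"
begin

lemma a_eq_neg_b: "a = neg b"
proof -
  have "c = R (R a \<boxplus> L b) \<boxplus> (R (L a) \<boxplus> L (L a))"
    using c_eq add_R_L_self[of "L a"] by (simp add: mult_eq_add)
  also have "\<dots> = (R (R a) \<boxplus> L (L a)) \<boxplus> (R (L a) \<boxplus> R (L b))"
    by (simp add: R_add add_ac)
  also have "\<dots> = R (L (a \<boxplus> b))"
    by (simp add: add_RR_LL R_add L_add)
  finally have "a \<boxplus> b = c"
    by (metis R_L_eq_iff R_c L_c a_in b_in add_closed c_in)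
  then show ?thesis using neg_unique[of a b] by simp
qed

lemma ba_eq_J: "m b a = J b"
proof -
  have RRb: "neg (L (L b)) = R (R b)"
    using add_RR_LL[of b] neg_unique[of "R (R b)" "L (L b)"] by simp
  have "L (m b a) = L (R b) \<boxplus> neg (L (L b))"
    by (simp add: mult_eq_add a_eq_neg_b L_add hom_neg[OF L_hom])
  also have "\<dots> = R (L b \<boxplus> R b)"
    using RRb by (simp add: R_add R_L_commute)
  also have "\<dots> = L (J b)"
    using add_R_L_self[of b] by (simp add: add_commute J_def flip: R_L_commute)
  finally show ?thesis
    by (metis L_eq_iff J_closed b_in a_in mult_closed)
qed

lemma ab_eq_neg_J: "m a b = neg (J b)"
proof -
  have "m a b = neg (R b) \<boxplus> L b"
    by (simp add: mult_eq_add a_eq_neg_b hom_neg[OF R_hom])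
  also have "\<dots> = neg (R b \<boxplus> neg (L b))"
    using G.inv_mult[of "R b" "neg (L b)"] by (simp add: add_commute)
  also have "\<dots> = neg (m b a)"
    by (simp add: mult_eq_add a_eq_neg_b hom_neg[OF L_hom])
  finally show ?thesis by (simp add: ba_eq_J)
qed

definition coord :: "int \<Rightarrow> int \<Rightarrow> 'a"
  where "coord p q = b [^]\<^bsub>G\<^esub> p \<boxplus> J b [^]\<^bsub>G\<^esub> q"

lemma coord_closed [simp]: "coord p q \<in> Q"
  using G.int_pow_closed by (simp add: coord_def)

lemma coord_add: "coord (p + p') (q + q') = coord p q \<boxplus> coord p' q'"
  using G.int_pow_closed by (simp add: coord_def G.int_pow_mult add_ac)

lemma coord_mult: "coord (k * p) (k * q) = coord p q [^]\<^bsub>G\<^esub> k"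
  using G.int_pow_closed G.int_pow_distrib
  by (simp add: coord_def G.int_pow_pow mult.commute)

lemma neg_coord: "neg (coord p q) = coord (- p) (- q)"
  using G.int_pow_closed G.inv_mult by (simp add: coord_def G.int_pow_neg add_commute)

lemma J_coord: "J (coord p q) = coord (- q) p"
  using G.int_pow_closed
  by (simp add: coord_def J_add hom_int_pow_G[OF J_hom] J_J G.int_pow_neg G.int_pow_inv add_commute)

lemma Rinv_coord: "Rinv (coord p q) = coord (p + q) (q - p)"
  using coord_add[of p q "q" "- p"] by (simp add: Rinv_eq J_coord neg_coord)

lemma Rinv_mult_coord: "Rinv (m (coord p q) (coord r s)) = coord (p + s) (q - r)"
proof -
  have "Rinv (m (coord p q) (coord r s)) = coord (r + s) (s - r) \<boxplus> (coord p q \<boxplus> coord (- r) (- s))"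
    by (simp add: Rinv_mult Rinv_coord neg_coord)
  also have "\<dots> = coord (p + s) (q - r)"
    by (simp add: add.commute flip: coord_add)
  finally show ?thesis .
qed

lemma coord_values:
  "coord 0 0 = c" "coord 1 0 = b" "coord (-1) 0 = a" "coord 0 1 = m b a" "coord 0 (-1) = m a b"
  by (simp_all add: coord_def G.int_pow_neg ba_eq_J ab_eq_neg_J flip: a_eq_neg_b)

lemma coord_shift: "coord p q = c \<Longrightarrow> coord (p + p') (q + q') = coord p' q'"
  by (simp add: coord_add)

lemma coord_eq_imp: "coord p q = coord p' q' \<Longrightarrow> coord (p - p') (q - q') = c"
  using coord_add[of p "- p'" q "- q'"] by (simp flip: neg_coord)

lemma coord_lincomb: "coord p q = c \<Longrightarrow> coord p' q' = c \<Longrightarrow> coord (k * p + l * p') (k * q + l * q') = c"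
  by (simp add: coord_add coord_mult)

lemma coord_card: "finite Q \<Longrightarrow> coord (int (card Q)) 0 = c \<and> coord 0 (int (card Q)) = c"
  using G.power_order_eq_one[of b] G.power_order_eq_one[of "J b"]
  by (simp add: coord_def int_pow_int)

lemma coord_eq_c_J: "coord p q = c \<Longrightarrow> coord (- q) p = c"
  by (metis J_coord J_c)

text \<open>A relation p b + q J b = 0 yields the relation -q b + p J b = 0 by applying J; each case is
  settled by an integer combination of the relation found, its J-image and 25 b = 25 J b = 0.\<close>

lemma coord_cases_of_order_25:
  assumes b25: "coord 25 0 = c" and Jb25: "coord 0 25 = c"
    and "coord (-1) 0 \<in> {coord 8 0, coord (-8) 0, coord 0 8, coord 0 (-8)}"
  shows "coord 1 0 = c \<or> coord 2 1 = c \<or> coord (-2) 1 = c"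
  using assms(3)
proof (elim insertE emptyE)
  assume "coord (-1) 0 = coord 8 0"
  then have "coord (-9) 0 = c" using coord_eq_imp by fastforce
  have "coord 1 0 = c" using coord_lincomb[OF \<open>coord (-9) 0 = c\<close> b25, of 11 4] by simp
  then show ?thesis ..
next
  assume "coord (-1) 0 = coord (-8) 0"
  then have "coord 7 0 = c" using coord_eq_imp by fastforce
  have "coord 1 0 = c" using coord_lincomb[OF \<open>coord 7 0 = c\<close> b25, of 18 "-5"] by simp
  then show ?thesis ..
next
  assume "coord (-1) 0 = coord 0 8"
  then have h: "coord (-1) (-8) = c" using coord_eq_imp by fastforce
  have "coord 127 (-24) = c" using coord_lincomb[OF h coord_eq_c_J[OF h], of 1 16] by simp
  have "coord 2 (-24) = c" using coord_lincomb[OF \<open>coord 127 (-24) = c\<close> b25, of 1 "-5"] by simp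
  have "coord 2 1 = c" using coord_lincomb[OF \<open>coord 2 (-24) = c\<close> Jb25, of 1 1] by simp
  then show ?thesis by simp
next
  assume "coord (-1) 0 = coord 0 (-8)"
  then have h: "coord (-1) 8 = c" using coord_eq_imp by fastforce
  have "coord (-52) 26 = c" using coord_lincomb[OF h coord_eq_c_J[OF h], of 4 6] by simp
  have "coord (-2) 26 = c" using coord_lincomb[OF \<open>coord (-52) 26 = c\<close> b25, of 1 2] by simp
  have "coord (-2) 1 = c" using coord_lincomb[OF \<open>coord (-2) 26 = c\<close> Jb25, of 1 "-1"] by simp
  then show ?thesis by simp
qed

section \<open>The quadruples H n\<close>

definition hq1 :: "nat \<Rightarrow> 'a" where "hq1 n = fst (hquad m a b n)"
definition hq2 :: "nat \<Rightarrow> 'a" where "hq2 n = fst (snd (hquad m a b n))"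
definition hq3 :: "nat \<Rightarrow> 'a" where "hq3 n = fst (snd (snd (hquad m a b n)))"
definition hq4 :: "nat \<Rightarrow> 'a" where "hq4 n = snd (snd (snd (hquad m a b n)))"

lemma hquad_eq: "hquad m a b n = (hq1 n, hq2 n, hq3 n, hq4 n)"
  by (simp add: hq1_def hq2_def hq3_def hq4_def)

lemma Hset_Suc: "Hset m a b (Suc n) = {hq1 n, hq2 n, hq3 n, hq4 n}"
  by (simp add: Hset_def hquad_eq)

lemma hq_0: "hq1 0 = a" "hq2 0 = m a b" "hq3 0 = m b a" "hq4 0 = b"
  by (simp_all add: hq1_def hq2_def hq3_def hq4_def)

lemma hq_Suc:
  "hq1 (Suc n) = m (hq1 n) (hq2 n)" "hq2 (Suc n) = m (hq2 n) (hq4 n)"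
  "hq3 (Suc n) = m (hq3 n) (hq1 n)" "hq4 (Suc n) = m (hq4 n) (hq3 n)"
  using hquad_eq[of "Suc n"] by (simp_all add: hquad_eq[of n])

lemma hq_closed [simp]: "hq1 n \<in> Q" "hq2 n \<in> Q" "hq3 n \<in> Q" "hq4 n \<in> Q"
proof -
  have "hq1 n \<in> Q \<and> hq2 n \<in> Q \<and> hq3 n \<in> Q \<and> hq4 n \<in> Q"
    by (induction n) (simp_all add: hq_0 hq_Suc)
  then show "hq1 n \<in> Q" "hq2 n \<in> Q" "hq3 n \<in> Q" "hq4 n \<in> Q" by auto
qed

lemma hq_0_coord: "hq1 0 = coord (-1) 0" "hq2 0 = coord 0 (-1)" "hq3 0 = coord 0 1" "hq4 0 = coord 1 0"
  by (simp_all add: hq_0 coord_values)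

lemma R_hq_Suc:
  "R (hq1 (Suc n)) = hq2 n \<and> R (hq2 (Suc n)) = hq4 n \<and> R (hq3 (Suc n)) = hq1 n \<and> R (hq4 (Suc n)) = hq3 n"
proof (induction n)
  case 0
  show ?case
    unfolding hq_Suc hq_0_coord
    by (intro conjI R_eq_if_Rinv_eq) (simp_all only: Rinv_mult_coord Rinv_coord coord_closed, simp_all)
next
  case (Suc n)
  then show ?case
    by (simp add: hq_Suc[of "Suc n"] R_mult hq_Suc[of n, symmetric])
qed

lemma hq_Suc_eq_Rinv:
  "hq1 (Suc n) = Rinv (hq2 n)" "hq2 (Suc n) = Rinv (hq4 n)"
  "hq3 (Suc n) = Rinv (hq1 n)" "hq4 (Suc n) = Rinv (hq3 n)"
  using R_hq_Suc[of n] by (metis Rinv_R hq_closed)+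

lemma hq_coords:
  "hq1 5 = coord 4 4" "hq2 5 = coord (-4) 4" "hq3 5 = coord 4 (-4)" "hq4 5 = coord (-4) (-4)"
  "hq2 2 = coord 2 0" "hq3 2 = coord (-2) 0"
  by (simp_all add: numeral_eq_Suc hq_Suc_eq_Rinv hq_0_coord Rinv_coord)

lemma R_image_Hset: "R ` Hset m a b (Suc (Suc n)) = Hset m a b (Suc n)"
  using R_hq_Suc[of n] by (auto simp: Hset_Suc)

lemma base_distinct:
  "a \<noteq> m a b" "a \<noteq> m b a" "b \<noteq> m a b" "b \<noteq> m b a" "m a b \<noteq> m b a"
  "c \<noteq> a" "c \<noteq> b" "c \<noteq> m a b" "c \<noteq> m b a"
proof -
  show a_ab: "a \<noteq> m a b" using left_cancel[of a a b] a_neq_b by (metis a_in b_in idem)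
  show "a \<noteq> m b a" using right_cancel[of a a b] a_neq_b by (metis a_in b_in idem)
  show "b \<noteq> m a b" using right_cancel[of b b a] a_neq_b by (metis a_in b_in idem)
  show "b \<noteq> m b a" using left_cancel[of b b a] a_neq_b by (metis a_in b_in idem)
  show "m a b \<noteq> m b a" using swapped_products[of a b] a_ab by (metis a_in b_in idem mult_closed)
  show c_a: "c \<noteq> a" using right_cancel[of a "m a b" a] a_ab c_eq by (metis a_in b_in idem mult_closed)
  show "c \<noteq> m a b" using left_cancel[of "m a b" a "m a b"] a_ab c_eq by (metis a_in b_in idem mult_closed)
  show "c \<noteq> b"
  proof
    assume "c = b"
    then have "a = neg c" using a_eq_neg_b by simp
    then show False using c_a by simp
  qed
  show "c \<noteq> m b a"
  proof
    assume "c = m b a"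
    then have "neg b = c" using J_J[of b] by (simp add: ba_eq_J)
    then show False using c_a a_eq_neg_b by simp
  qed
qed

lemma hq_distinct:
  "hq1 n \<noteq> hq2 n \<and> hq1 n \<noteq> hq3 n \<and> hq1 n \<noteq> hq4 n \<and> hq2 n \<noteq> hq3 n \<and> hq2 n \<noteq> hq4 n
   \<and> hq3 n \<noteq> hq4 n \<and> c \<noteq> hq1 n \<and> c \<noteq> hq2 n \<and> c \<noteq> hq3 n \<and> c \<noteq> hq4 n"
proof (induction n)
  case 0
  then show ?case using base_distinct a_neq_b by (simp add: hq_0)
next
  case (Suc n)
  then show ?case using R_hq_Suc[of n] R_c by metis
qed

lemma card_Hset: "card (Hset m a b (Suc n)) = 4"
  using hq_distinct[of n] by (simp add: Hset_Suc)

lemma c_notin_Hset: "c \<notin> Hset m a b (Suc n)"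
  using hq_distinct[of n] by (simp add: Hset_Suc)

lemma Hset_Suc_subset: "Hset m a b (Suc n) \<subseteq> Q"
  by (simp add: Hset_Suc)

end

section \<open>Six disjoint quadruples cannot make up Q\<close>

locale quadratical_six_levels = quadratical_generated +
  assumes cover: "Q = {c} \<union> (\<Union>t\<in>{1..6}. Hset m a b t)"
    and disjoint: "\<forall>s\<in>{1..6::nat}. \<forall>t\<in>{1..6}. s \<noteq> t \<longrightarrow> Hset m a b s \<inter> Hset m a b t = {}"
begin

lemma card_Q: "finite Q \<and> card Q = 25"
proof -
  have card4: "\<And>t. t \<in> {1..6::nat} \<Longrightarrow> card (Hset m a b t) = 4"
    using card_Hset by (metis atLeastAtMost_iff not0_implies_Suc not_one_le_zero)
  have c_notin: "\<And>t. t \<in> {1..6::nat} \<Longrightarrow> c \<notin> Hset m a b t"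
    using c_notin_Hset by (metis atLeastAtMost_iff not0_implies_Suc not_one_le_zero)
  have fin: "\<And>t. finite (Hset m a b t)"
    by (simp add: Hset_def split: prod.split)
  have "card (\<Union>t\<in>{1..6}. Hset m a b t) = (\<Sum>t\<in>{1..6::nat}. card (Hset m a b t))"
    using fin disjoint by (intro card_UN_disjoint) auto
  also have "\<dots> = 24"
    using card4 by simp
  finally have "card (\<Union>t\<in>{1..6}. Hset m a b t) = 24" .
  moreover have "c \<notin> (\<Union>t\<in>{1..6}. Hset m a b t)"
    using c_notin by blast
  ultimately show ?thesis
    using cover fin by (simp add: card_insert_disjoint)
qed

lemma R_a_in_Hset_6: "R a \<in> Hset m a b 6"
proof -
  have "R a \<noteq> c" using base_distinct(6) R_eq_iff[of a c] by auto
  then obtain t where t: "t \<in> {1..6::nat}" "R a \<in> Hset m a b t"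
    using cover R_closed[OF a_in] by auto
  show ?thesis
  proof (rule ccontr)
    assume "R a \<notin> Hset m a b 6"
    with t have "t \<noteq> 6" by auto
    with t obtain n where n: "t = Suc n" "n \<le> 4"
      by (intro that[of "t - 1"]) auto
    have "R a \<in> R ` Hset m a b (Suc (Suc n))"
      using t(2) n(1) R_image_Hset by simp
    then obtain x where x: "x \<in> Hset m a b (Suc (Suc n))" "R a = R x" by blast
    then have "a = x"
      using Hset_Suc_subset R_eq_iff[of a x] a_in by blast
    with x have "a \<in> Hset m a b (Suc (Suc n))" by simp
    moreover have "a \<in> Hset m a b 1"
      using Hset_Suc[of 0] by (simp add: hq_0)
    ultimately show False
      using disjoint[rule_format, of 1 "Suc (Suc n)"] n by auto
  qed
qed

lemma a_coord_cases: "coord (-1) 0 \<in> {coord 8 0, coord (-8) 0, coord 0 8, coord 0 (-8)}"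
proof -
  have "R a \<in> {coord 4 4, coord (-4) 4, coord 4 (-4), coord (-4) (-4)}"
    using R_a_in_Hset_6 Hset_Suc[of 5] hq_coords by (simp add: numeral_eq_Suc)
  then have "Rinv (R a) \<in> Rinv ` {coord 4 4, coord (-4) 4, coord 4 (-4), coord (-4) (-4)}"
    by blast
  then show ?thesis
    by (auto simp: Rinv_coord coord_values)
qed

lemma ba_notin_level_3: "m b a \<noteq> hq2 2" "m b a \<noteq> hq3 2"
proof -
  have "m b a \<in> Hset m a b 1" "hq2 2 \<in> Hset m a b 3" "hq3 2 \<in> Hset m a b 3"
    using Hset_Suc[of 0] Hset_Suc[of 2] by (simp_all add: hq_0 numeral_eq_Suc)
  moreover have "Hset m a b 1 \<inter> Hset m a b 3 = {}"
    using disjoint by auto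
  ultimately show "m b a \<noteq> hq2 2" "m b a \<noteq> hq3 2" by auto
qed

lemma six_levels_absurd: False
proof -
  have "coord 25 0 = c" "coord 0 25 = c"
    using coord_card card_Q by simp_all
  then consider "coord 1 0 = c" | "coord 2 1 = c" | "coord (-2) 1 = c"
    using coord_cases_of_order_25 a_coord_cases by blast
  then show False
  proof cases
    case 1
    then show False using base_distinct(7) coord_values(2) by simp
  next
    case 2
    then have "m b a = hq3 2"
      using coord_shift[OF 2, of "-2" 0] by (simp add: hq_coords coord_values)
    then show False using ba_notin_level_3 by simp
  next
    case 3
    then have "m b a = hq2 2"
      using coord_shift[OF 3, of 2 0] by (simp add: hq_coords coord_values)
    then show False using ba_notin_level_3 by simp
  qed
qed

end

theorem theorem7p1:
  fixes Q :: "'a set" and m :: "'a \<Rightarrow> 'a \<Rightarrow> 'a" and a b :: 'a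
  assumes "quadratical_quasigroup Q m"
    and "a \<in> Q" and "b \<in> Q" and "a \<noteq> b"
    and "Q = {m (m a b) a} \<union> (\<Union>t\<in>{1..6}. Hset m a b t)"
    and "\<forall>s\<in>{1..6::nat}. \<forall>t\<in>{1..6}. s \<noteq> t \<longrightarrow> Hset m a b s \<inter> Hset m a b t = {}"
  shows False
proof -
  have "quadratical Q m"
    using assms(1) by unfold_locales
  then have "quadratical_six_levels Q m (m (m a b) a) a b"
    using assms quadratical.mult_closed by unfold_locales auto
  then show False
    by (rule quadratical_six_levels.six_levels_absurd)
qed

end
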